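(* Let $\mathbf{IL}\mathsf X$ be a Horn logic and $A$ a formula. If a systematic $\mathbf{IL}\mathsf X$-tableau for $\{\neg A\}$ closes, then $A$ is $\mathbf{IL}\mathsf X$-valid, i.e. $M,x\Vdash A$ for every $\mathbf{IL}\mathsf X$-model $M$ and every world $x$ of $M$.
   Context: Formulas: built from a countable set $\mathsf{Prop}$ of propositional variables by $\neg$, $\to$, unary $\Box$ and binary $\rhd$. $\mathbf{IL}$ is the modal logic with axioms all instances of propositional tautologies and the schemes $\Box(A\to B)\to(\Box A\to\Box B)$, $\Box(\Box A\to A)\to\Box A$, $\Box(A\to B)\to A\rhd B$, $(A\rhd B)\wedge(B\rhd C)\to A\rhd C$, $(A\rhd C)\wedge(B\rhd C)\to A\vee B\rhd C$, $A\rhd B\to(\Diamond A\to\Diamond B)$, $\Diamond A\rhd A$ ($\Diamond=\neg\Box\neg$), rules modus ponens and necessitation. An $\mathbf{IL}$-frame is $\langle W,R,S\rangle$ with $W\neq\emptyset$, $R$ transitive and Noetherian (no infinite chains $x_0Rx_1Rx_2\cdots$), $S$ ternary, $yS_xz$ meaning $(x,y,z)\in S$, each $S_x$ a reflexive transitive relation on $\{y:xRy\}$, and $xRyRz\Rightarrow yS_xz$. A model adds a valuation $V$; forcing standard for $\neg,\to$; $x\Vdash\Box A$ iff all $R$-successors force $A$; $x\Vdash A\rhd B$ iff for every $y$ with $xRy$, $y\Vdash A$ there is $z$ with $yS_xz$, $z\Vdash B$. $\mathbf{IL}\mathsf X$ is $\mathbf{IL}$ plus axiom schemes $\mathsf X$;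 it is Horn if there is a set $\mathcal C_{\mathsf X}$ of strict universal Horn sentences $\forall\cdots\forall(\varphi_1\wedge\dots\wedge\varphi_n\to\psi)$ ($n\ge0$, atomic $\varphi_i,\psi$) in the language $\{R,S\}$ such that an $\mathbf{IL}$-frame validates all theorems of $\mathbf{IL}\mathsf X$ iff it satisfies $\mathcal C_{\mathsf X}$; $\mathbf{IL}\mathsf X$-frames/models are those satisfying $\mathcal C_{\mathsf X}$. Labels: $0$; $\sigma Rn$ for a label $\sigma$, $n\in\mathbb N$; $\sigma S_\rho n$ for labels $\sigma,\rho$ with $\rho$ a strict non-empty prefix of $\sigma$. Extended formulas also allow unary operators $\Box_\rho$, $\rho$ a label. Labelled formula: $\sigma::A$. For a set $\Lambda$ of labels, $\mathbf R^\Lambda,\mathbf S^\Lambda$ are the least relations on $\Lambda$ with: (1) $\sigma,\sigma Rn\in\Lambda\Rightarrow\sigma\mathbf R\,\sigma Rn$; (2) $\mathbf R$ transitive; (3) $\sigma,\rho,\sigma S_\rho n\in\Lambda\Rightarrow\sigma\mathbf S_\rho\,\sigma S_\rho n$; (4) $\sigma\mathbf R\tau\Rightarrow\tau\mathbf S_\sigma\tau$; (5) $\rho\mathbf R\sigma\mathbf R\tau\Rightarrow\sigma\mathbf S_\rho\tau$; (6) $\sigma\mathbf S_\rho\tau\mathbf S_\rho\upsilon\Rightarrow\sigma\mathbf S_\rho\upsilon$; (7) $\sigma\mathbf S_\rho\tau\Rightarrow\rho\mathbf R\sigma,\rho\mathbf R\tau$; (8) $\langle\Lambda,\mathbf R^\Lambda,\mathbf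 S^\Lambda\rangle\models\mathcal C_{\mathsf X}$ (where $\sigma\mathbf S_\rho\tau$ means $(\rho,\sigma,\tau)\in\mathbf S^\Lambda$). For a branch $\mathcal B$, $\mathrm{lab}(\mathcal B)$ is the set of labels on it and relations refer to $\mathbf R^{\mathrm{lab}(\mathcal B)},\mathbf S^{\mathrm{lab}(\mathcal B)}$. A branch is closed if it contains $\sigma::A$ and $\sigma::\neg A$ for some $\sigma,A$, otherwise open. Systematic $\mathbf{IL}\mathsf X$-tableau for finite $\Gamma$: built in stages $T_0\subseteq T_1\subseteq\cdots$, nodes marked awake, asleep or finished. Stage 0: nodes $0::A$, $A\in\Gamma$, one below another, all awake. Stage $n+1$: choose an awake node $\sigma::A$ closest to the root (leftmost among ties). If $A$ is $p$ or $\neg p$ ($p\in\mathsf{Prop}$), mark it finished. Otherwise (new nodes marked awake; "extend" = append at the bottom): $\neg\neg B$: extend each open branch through it with $\sigma::B$; finished. $B\to C$: split each open branch through it, left $\sigma::\neg B$, right $\sigma::C$; finished. $\neg(B\to C)$: extend with $\sigma::B,\sigma::\neg C$; finished. $\Box B$: for each open branch $\mathcal B$ through it and each $\tau\in\mathrm{lab}(\mathcal B)$ with $\sigma\mathbf R\tau$, extend with $\tau::B$; asleep. $\neg\Box B$: for each open branch $\mathcal B$ through it, $n$ least with $\sigma Rn\notin\mathrm{lab}(\mathcal B)$, extend with $\sigma Rn::\neg B,\sigma Rn::\Box B$; finished; also mark awake every node $\tau::\Box D$, $\tau::D\rhd E$ on $\mathcal B$ with $\tau\mathbf R\,\sigma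 Rn$ and every $\tau::\Box_\kappa D$ on $\mathcal B$ with $\tau\mathbf S_\kappa\,\sigma Rn$. $\Box_\rho B$: for each branch $\mathcal B$ through it and each $\tau\in\mathrm{lab}(\mathcal B)$ with $\sigma\mathbf S_\rho\tau$, extend with $\tau::B$; asleep. $\neg\Box_\rho B$: for each open branch, $n$ least with $\sigma S_\rho n\notin\mathrm{lab}(\mathcal B)$, extend with $\sigma S_\rho n::\neg B,\sigma S_\rho n::\Box B$; finished; reawaken as in the $\neg\Box$ case with new label $\sigma S_\rho n$. $B\rhd C$: for each open branch $\mathcal B$ through it and each $\tau\in\mathrm{lab}(\mathcal B)$ with $\sigma\mathbf R\tau$, split, left $\tau::\neg B$, right $\tau::\neg\Box_\sigma\neg C$; asleep. $\neg(B\rhd C)$: for each open branch, $n$ least with $\sigma Rn\notin\mathrm{lab}(\mathcal B)$, extend with $\sigma Rn::B,\sigma Rn::\Box_\sigma\neg C,\sigma Rn::\Box\neg B$; finished; reawaken as in the $\neg\Box$ case. The systematic tableau is $\bigcup_iT_i$; it closes if all its branches are closed. *)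

theory Defs
  imports Main "HOL-Library.Sublist"
begin

datatype fm = Var nat | Neg fm | Imp fm fm | Box fm | Rhd fm fm

definition And :: "fm \<Rightarrow> fm \<Rightarrow> fm" where "And A B = Neg (Imp A (Neg B))"
definition Or :: "fm \<Rightarrow> fm \<Rightarrow> fm" where "Or A B = Imp (Neg A) B"
definition Dia :: "fm \<Rightarrow> fm" where "Dia A = Neg (Box (Neg A))"

(* S x y z  means  y S_x z, i.e. (x,y,z) \<in> S *)
definition IL_frame :: "'w set \<Rightarrow> ('w \<Rightarrow> 'w \<Rightarrow> bool) \<Rightarrow> ('w \<Rightarrow> 'w \<Rightarrow> 'w \<Rightarrow> bool) \<Rightarrow> bool" where
  "IL_frame W R S \<longleftrightarrow>
     W \<noteq> {} \<and>
     (\<forall>x y. R x y \<longrightarrow> x \<in> W \<and> y \<in> W) \<and>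
     (\<forall>x y z. R x y \<longrightarrow> R y z \<longrightarrow> R x z) \<and>
     \<not> (\<exists>f :: nat \<Rightarrow> 'w. \<forall>i. R (f i) (f (Suc i))) \<and>
     (\<forall>x y z. S x y z \<longrightarrow> x \<in> W \<and> R x y \<and> R x z) \<and>
     (\<forall>x y. R x y \<longrightarrow> S x y y) \<and>
     (\<forall>x y z u. S x y z \<longrightarrow> S x z u \<longrightarrow> S x y u) \<and>
     (\<forall>x y z. R x y \<longrightarrow> R y z \<longrightarrow> S x y z)"

fun forces :: "('w \<Rightarrow> 'w \<Rightarrow> bool) \<Rightarrow> ('w \<Rightarrow> 'w \<Rightarrow> 'w \<Rightarrow> bool) \<Rightarrow> (nat \<Rightarrow> 'w \<Rightarrow> bool)
                 \<Rightarrow> 'w \<Rightarrow> fm \<Rightarrow> bool" where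
  "forces R S V x (Var p) = V p x"
| "forces R S V x (Neg A) = (\<not> forces R S V x A)"
| "forces R S V x (Imp A B) = (forces R S V x A \<longrightarrow> forces R S V x B)"
| "forces R S V x (Box A) = (\<forall>y. R x y \<longrightarrow> forces R S V y A)"
| "forces R S V x (Rhd A B) =
     (\<forall>y. R x y \<longrightarrow> forces R S V y A \<longrightarrow> (\<exists>z. S x y z \<and> forces R S V z B))"

definition frame_valid :: "'w set \<Rightarrow> ('w \<Rightarrow> 'w \<Rightarrow> bool) \<Rightarrow> ('w \<Rightarrow> 'w \<Rightarrow> 'w \<Rightarrow> bool) \<Rightarrow> fm \<Rightarrow> bool" where
  "frame_valid W R S A \<longleftrightarrow> (\<forall>V. \<forall>x\<in>W. forces R S V x A)"

(* propositional evaluation: modal subformulas are treated as atoms *)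
fun peval :: "(fm \<Rightarrow> bool) \<Rightarrow> fm \<Rightarrow> bool" where
  "peval I (Var p) = I (Var p)"
| "peval I (Neg A) = (\<not> peval I A)"
| "peval I (Imp A B) = (peval I A \<longrightarrow> peval I B)"
| "peval I (Box A) = I (Box A)"
| "peval I (Rhd A B) = I (Rhd A B)"

(* instances of propositional tautologies *)
definition taut :: "fm \<Rightarrow> bool" where "taut A \<longleftrightarrow> (\<forall>I. peval I A)"

fun subst :: "(nat \<Rightarrow> fm) \<Rightarrow> fm \<Rightarrow> fm" where
  "subst s (Var p) = s p"
| "subst s (Neg A) = Neg (subst s A)"
| "subst s (Imp A B) = Imp (subst s A) (subst s B)"
| "subst s (Box A) = Box (subst s A)"
| "subst s (Rhd A B) = Rhd (subst s A) (subst s B)"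

(* X is a set of axiom schemes; its instances are all substitution instances *)
inductive ILX_thm :: "fm set \<Rightarrow> fm \<Rightarrow> bool" for X where
  tautI: "taut A \<Longrightarrow> ILX_thm X A"
| K: "ILX_thm X (Imp (Box (Imp A B)) (Imp (Box A) (Box B)))"
| L: "ILX_thm X (Imp (Box (Imp (Box A) A)) (Box A))"
| J1: "ILX_thm X (Imp (Box (Imp A B)) (Rhd A B))"
| J2: "ILX_thm X (Imp (And (Rhd A B) (Rhd B C)) (Rhd A C))"
| J3: "ILX_thm X (Imp (And (Rhd A C) (Rhd B C)) (Rhd (Or A B) C))"
| J4: "ILX_thm X (Imp (Rhd A B) (Imp (Dia A) (Dia B)))"
| J5: "ILX_thm X (Rhd (Dia A) A)"
| Xax: "B \<in> X \<Longrightarrow> ILX_thm X (subst s B)"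
| MP: "ILX_thm X (Imp A B) \<Longrightarrow> ILX_thm X A \<Longrightarrow> ILX_thm X B"
| Nec: "ILX_thm X A \<Longrightarrow> ILX_thm X (Box A)"

definition frame_validates_ILX :: "fm set \<Rightarrow> 'w set \<Rightarrow> ('w \<Rightarrow> 'w \<Rightarrow> bool) \<Rightarrow> ('w \<Rightarrow> 'w \<Rightarrow> 'w \<Rightarrow> bool) \<Rightarrow> bool" where
  "frame_validates_ILX X W R S \<longleftrightarrow> (\<forall>A. ILX_thm X A \<longrightarrow> frame_valid W R S A)"

(* variables are natural numbers; HS i j k stands for the atom S(v_i,v_j,v_k),
   i.e. v_j S_{v_i} v_k *)
datatype hatom = HR nat nat | HS nat nat nat

(* a strict universal Horn sentence: (list of premises, conclusion), universally closed *)
type_synonym horn = "hatom list \<times> hatom"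

fun hholds :: "('w \<Rightarrow> 'w \<Rightarrow> bool) \<Rightarrow> ('w \<Rightarrow> 'w \<Rightarrow> 'w \<Rightarrow> bool) \<Rightarrow> (nat \<Rightarrow> 'w) \<Rightarrow> hatom \<Rightarrow> bool" where
  "hholds R S v (HR i j) = R (v i) (v j)"
| "hholds R S v (HS i j k) = S (v i) (v j) (v k)"

definition horn_sat :: "horn set \<Rightarrow> 'w set \<Rightarrow> ('w \<Rightarrow> 'w \<Rightarrow> bool) \<Rightarrow> ('w \<Rightarrow> 'w \<Rightarrow> 'w \<Rightarrow> bool) \<Rightarrow> bool" where
  "horn_sat C W R S \<longleftrightarrow>
     (\<forall>h\<in>C. \<forall>v. (\<forall>i. v i \<in> W) \<longrightarrow> (\<forall>a\<in>set (fst h). hholds R S v a) \<longrightarrow> hholds R S v (snd h))"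

definition ILX_model :: "horn set \<Rightarrow> 'w set \<Rightarrow> ('w \<Rightarrow> 'w \<Rightarrow> bool) \<Rightarrow> ('w \<Rightarrow> 'w \<Rightarrow> 'w \<Rightarrow> bool)
                          \<Rightarrow> (nat \<Rightarrow> 'w \<Rightarrow> bool) \<Rightarrow> bool" where
  "ILX_model C W R S V \<longleftrightarrow> IL_frame W R S \<and> horn_sat C W R S"

(* Root = 0;  LR \<sigma> n = \<sigma>Rn;  LS \<sigma> \<rho> n = \<sigma>S_\<rho>n *)
datatype label = Root | LR label nat | LS label label nat

(* extended formulas: additionally Box_\<rho> (EBoxL \<rho> B) *)
datatype efm = EVar nat | ENeg efm | EImp efm efm | EBox efm | ERhd efm efm | EBoxL label efm

fun emb :: "fm \<Rightarrow> efm" where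
  "emb (Var p) = EVar p"
| "emb (Neg A) = ENeg (emb A)"
| "emb (Imp A B) = EImp (emb A) (emb B)"
| "emb (Box A) = EBox (emb A)"
| "emb (Rhd A B) = ERhd (emb A) (emb B)"

(* RA \<sigma> \<tau>: \<sigma> R \<tau>;   SA \<rho> \<sigma> \<tau>: \<sigma> S_\<rho> \<tau>, i.e. (\<rho>,\<sigma>,\<tau>) \<in> S *)
datatype ratom = RA label label | SA label label label

fun hinst :: "(nat \<Rightarrow> label) \<Rightarrow> hatom \<Rightarrow> ratom" where
  "hinst v (HR i j) = RA (v i) (v j)"
| "hinst v (HS i j k) = SA (v i) (v j) (v k)"

inductive lrel :: "label set \<Rightarrow> horn set \<Rightarrow> ratom \<Rightarrow> bool" for \<Lambda> C where
  c1: "\<sigma> \<in> \<Lambda> \<Longrightarrow> LR \<sigma> n \<in> \<Lambda> \<Longrightarrow> lrel \<Lambda> C (RA \<sigma> (LR \<sigma> n))"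
| c2: "lrel \<Lambda> C (RA a b) \<Longrightarrow> lrel \<Lambda> C (RA b c) \<Longrightarrow> lrel \<Lambda> C (RA a c)"
| c3: "\<sigma> \<in> \<Lambda> \<Longrightarrow> \<rho> \<in> \<Lambda> \<Longrightarrow> LS \<sigma> \<rho> n \<in> \<Lambda> \<Longrightarrow> lrel \<Lambda> C (SA \<rho> \<sigma> (LS \<sigma> \<rho> n))"
| c4: "lrel \<Lambda> C (RA \<sigma> \<tau>) \<Longrightarrow> lrel \<Lambda> C (SA \<sigma> \<tau> \<tau>)"
| c5: "lrel \<Lambda> C (RA \<rho> \<sigma>) \<Longrightarrow> lrel \<Lambda> C (RA \<sigma> \<tau>) \<Longrightarrow> lrel \<Lambda> C (SA \<rho> \<sigma> \<tau>)"
| c6: "lrel \<Lambda> C (SA \<rho> \<sigma> \<tau>) \<Longrightarrow> lrel \<Lambda> C (SA \<rho> \<tau> \<upsilon>) \<Longrightarrow> lrel \<Lambda> C (SA \<rho> \<sigma> \<upsilon>)"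
| c7a: "lrel \<Lambda> C (SA \<rho> \<sigma> \<tau>) \<Longrightarrow> lrel \<Lambda> C (RA \<rho> \<sigma>)"
| c7b: "lrel \<Lambda> C (SA \<rho> \<sigma> \<tau>) \<Longrightarrow> lrel \<Lambda> C (RA \<rho> \<tau>)"
| c8: "h \<in> C \<Longrightarrow> (\<forall>i. v i \<in> \<Lambda>) \<Longrightarrow> (\<forall>a\<in>set (fst h). lrel \<Lambda> C (hinst v a))
        \<Longrightarrow> lrel \<Lambda> C (hinst v (snd h))"

datatype mark = Awake | Asleep | Finished

(* a tableau: a finite tree, nodes addressed by positions (paths of child indices);
   a node with one child has it at p@[0], a split node has children p@[0], p@[1] *)
type_synonym tableau = "nat list \<Rightarrow> (label \<times> efm \<times> mark) option"

definition is_leaf :: "tableau \<Rightarrow> nat list \<Rightarrow> bool" where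
  "is_leaf T q \<longleftrightarrow> T q \<noteq> None \<and> T (q @ [0]) = None"

definition branch_fms :: "tableau \<Rightarrow> nat list \<Rightarrow> (label \<times> efm) set" where
  "branch_fms T q = {(\<sigma>, A). \<exists>p m. prefix p q \<and> T p = Some (\<sigma>, A, m)}"

definition lab :: "tableau \<Rightarrow> nat list \<Rightarrow> label set" where
  "lab T q = fst ` branch_fms T q"

definition closed_set :: "(label \<times> efm) set \<Rightarrow> bool" where
  "closed_set F \<longleftrightarrow> (\<exists>\<sigma> A. (\<sigma>, A) \<in> F \<and> (\<sigma>, ENeg A) \<in> F)"

definition awake_at :: "tableau \<Rightarrow> nat list \<Rightarrow> bool" where
  "awake_at T p \<longleftrightarrow> (\<exists>\<sigma> A. T p = Some (\<sigma>, A, Awake))"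

(* breadth-first order: closer to the root first, leftmost among ties *)
definition bf_less :: "nat list \<Rightarrow> nat list \<Rightarrow> bool" where
  "bf_less p q \<longleftrightarrow> length p < length q \<or>
     (length p = length q \<and> (\<exists>r a b s t. p = r @ a # s \<and> q = r @ b # t \<and> a < b))"

definition selected :: "tableau \<Rightarrow> nat list \<Rightarrow> bool" where
  "selected T p \<longleftrightarrow> awake_at T p \<and> (\<forall>q. awake_at T q \<longrightarrow> q = p \<or> bf_less p q)"

(* what gets appended below a leaf: a chain of nodes, or successive splits *)
datatype pat = Chain "(label \<times> efm) list" | Splits "((label \<times> efm) \<times> (label \<times> efm)) list"

fun patmap :: "pat \<Rightarrow> nat list \<Rightarrow> (label \<times> efm) option" where
  "patmap (Chain fs) r =
     (if r \<noteq> [] \<and> set r \<subseteq> {0} \<and> length r \<le> length fs then Some (fs ! (length r - 1)) else None)"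
| "patmap (Splits ps) r =
     (if r \<noteq> [] \<and> set r \<subseteq> {0, 1} \<and> length r \<le> length ps
      then Some (if last r = 0 then fst (ps ! (length r - 1)) else snd (ps ! (length r - 1)))
      else None)"

definition enum_of :: "'a list \<Rightarrow> 'a set \<Rightarrow> bool" where
  "enum_of xs A \<longleftrightarrow> distinct xs \<and> set xs = A"

fun rule_pat :: "horn set \<Rightarrow> tableau \<Rightarrow> nat list \<Rightarrow> label \<Rightarrow> efm \<Rightarrow> pat \<Rightarrow> bool" where
  "rule_pat C T q \<sigma> (EVar p) P = (P = Chain [])"
| "rule_pat C T q \<sigma> (ENeg (EVar p)) P = (P = Chain [])"
| "rule_pat C T q \<sigma> (ENeg (ENeg B)) P =
     (P = (if closed_set (branch_fms T q) then Chain [] else Chain [(\<sigma>, B)]))"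
| "rule_pat C T q \<sigma> (EImp B D) P =
     (P = (if closed_set (branch_fms T q) then Chain [] else Splits [((\<sigma>, ENeg B), (\<sigma>, D))]))"
| "rule_pat C T q \<sigma> (ENeg (EImp B D)) P =
     (P = (if closed_set (branch_fms T q) then Chain [] else Chain [(\<sigma>, B), (\<sigma>, ENeg D)]))"
| "rule_pat C T q \<sigma> (EBox B) P =
     (if closed_set (branch_fms T q) then P = Chain []
      else (\<exists>ts. enum_of ts {\<tau> \<in> lab T q. lrel (lab T q) C (RA \<sigma> \<tau>)} \<and>
                 P = Chain (map (\<lambda>\<tau>. (\<tau>, B)) ts)))"
| "rule_pat C T q \<sigma> (ENeg (EBox B)) P =
     (P = (if closed_set (branch_fms T q) then Chain []
           else (let \<nu> = LR \<sigma> (LEAST n. LR \<sigma> n \<notin> lab T q)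
                 in Chain [(\<nu>, ENeg B), (\<nu>, EBox B)])))"
| "rule_pat C T q \<sigma> (EBoxL \<rho> B) P =
     (\<exists>ts. enum_of ts {\<tau> \<in> lab T q. lrel (lab T q) C (SA \<rho> \<sigma> \<tau>)} \<and>
           P = Chain (map (\<lambda>\<tau>. (\<tau>, B)) ts))"
| "rule_pat C T q \<sigma> (ENeg (EBoxL \<rho> B)) P =
     (P = (if closed_set (branch_fms T q) then Chain []
           else (let \<nu> = LS \<sigma> \<rho> (LEAST n. LS \<sigma> \<rho> n \<notin> lab T q)
                 in Chain [(\<nu>, ENeg B), (\<nu>, EBox B)])))"
| "rule_pat C T q \<sigma> (ERhd B D) P =
     (if closed_set (branch_fms T q) then P = Chain []
      else (\<exists>ts. enum_of ts {\<tau> \<in> lab T q. lrel (lab T q) C (RA \<sigma> \<tau>)} \<and>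
                 P = Splits (map (\<lambda>\<tau>. ((\<tau>, ENeg B), (\<tau>, ENeg (EBoxL \<sigma> (ENeg D))))) ts)))"
| "rule_pat C T q \<sigma> (ENeg (ERhd B D)) P =
     (P = (if closed_set (branch_fms T q) then Chain []
           else (let \<nu> = LR \<sigma> (LEAST n. LR \<sigma> n \<notin> lab T q)
                 in Chain [(\<nu>, B), (\<nu>, EBoxL \<sigma> (ENeg D)), (\<nu>, EBox (ENeg B))])))"

fun new_mark :: "efm \<Rightarrow> mark" where
  "new_mark (EBox B) = Asleep"
| "new_mark (EBoxL \<rho> B) = Asleep"
| "new_mark (ERhd B D) = Asleep"
| "new_mark _ = Finished"

fun new_label :: "tableau \<Rightarrow> nat list \<Rightarrow> label \<Rightarrow> efm \<Rightarrow> label option" where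
  "new_label T q \<sigma> (ENeg (EBox B)) = Some (LR \<sigma> (LEAST n. LR \<sigma> n \<notin> lab T q))"
| "new_label T q \<sigma> (ENeg (EBoxL \<rho> B)) = Some (LS \<sigma> \<rho> (LEAST n. LS \<sigma> \<rho> n \<notin> lab T q))"
| "new_label T q \<sigma> (ENeg (ERhd B D)) = Some (LR \<sigma> (LEAST n. LR \<sigma> n \<notin> lab T q))"
| "new_label T q \<sigma> _ = None"

definition reawake :: "horn set \<Rightarrow> tableau \<Rightarrow> nat list \<Rightarrow> label \<Rightarrow> efm \<Rightarrow> nat list \<Rightarrow> bool" where
  "reawake C T p \<sigma> A r \<longleftrightarrow>
     (\<exists>q \<nu>. is_leaf T q \<and> prefix p q \<and> \<not> closed_set (branch_fms T q) \<and> prefix r q \<and>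
        new_label T q \<sigma> A = Some \<nu> \<and>
        (\<exists>\<tau> B m. T r = Some (\<tau>, B, m) \<and>
           ((\<exists>D. B = EBox D) \<and> lrel (insert \<nu> (lab T q)) C (RA \<tau> \<nu>)
          \<or> (\<exists>D E. B = ERhd D E) \<and> lrel (insert \<nu> (lab T q)) C (RA \<tau> \<nu>)
          \<or> (\<exists>\<kappa> D. B = EBoxL \<kappa> D \<and> lrel (insert \<nu> (lab T q)) C (SA \<kappa> \<tau> \<nu>)))))"

definition sys_step :: "horn set \<Rightarrow> tableau \<Rightarrow> tableau \<Rightarrow> bool" where
  "sys_step C T T' \<longleftrightarrow>
     ((\<nexists>p. awake_at T p) \<and> T' = T) \<or>
     (\<exists>p \<sigma> A P. selected T p \<and> T p = Some (\<sigma>, A, Awake) \<and>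
        (\<forall>q. is_leaf T q \<and> prefix p q \<longrightarrow> rule_pat C T q \<sigma> A (P q)) \<and>
        T' = (\<lambda>r.
          if \<exists>q. is_leaf T q \<and> prefix p q \<and> strict_prefix q r then
            (let q = (SOME q. is_leaf T q \<and> prefix p q \<and> strict_prefix q r)
             in map_option (\<lambda>(\<tau>, B). (\<tau>, B, Awake)) (patmap (P q) (drop (length q) r)))
          else (case T r of
                  None \<Rightarrow> None
                | Some (\<tau>, B, m) \<Rightarrow>
                    Some (\<tau>, B, if r = p then new_mark A
                                 else if reawake C T p \<sigma> A r then Awake else m))))"

definition init_tab :: "fm \<Rightarrow> tableau" where
  "init_tab A = (\<lambda>r. if r = [] then Some (Root, ENeg (emb A), Awake) else None)"

definition systematic_tableau :: "horn set \<Rightarrow> fm \<Rightarrow> (nat \<Rightarrow> tableau) \<Rightarrow> bool" where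
  "systematic_tableau C A Ts \<longleftrightarrow> Ts 0 = init_tab A \<and> (\<forall>i. sys_step C (Ts i) (Ts (Suc i)))"

definition lim_dom :: "(nat \<Rightarrow> tableau) \<Rightarrow> nat list set" where
  "lim_dom Ts = {r. \<exists>i. Ts i r \<noteq> None}"

definition lim_content :: "(nat \<Rightarrow> tableau) \<Rightarrow> nat list \<Rightarrow> label \<times> efm" where
  "lim_content Ts r = (case the (Ts (LEAST i. Ts i r \<noteq> None) r) of (\<sigma>, A, m) \<Rightarrow> (\<sigma>, A))"

definition is_chain :: "nat list set \<Rightarrow> bool" where
  "is_chain P \<longleftrightarrow> (\<forall>a\<in>P. \<forall>b\<in>P. prefix a b \<or> prefix b a)"

definition lim_branch :: "(nat \<Rightarrow> tableau) \<Rightarrow> nat list set \<Rightarrow> bool" where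
  "lim_branch Ts P \<longleftrightarrow> P \<subseteq> lim_dom Ts \<and> is_chain P \<and>
     (\<forall>Q. Q \<subseteq> lim_dom Ts \<and> is_chain Q \<and> P \<subseteq> Q \<longrightarrow> Q = P)"

definition tab_closes :: "(nat \<Rightarrow> tableau) \<Rightarrow> bool" where
  "tab_closes Ts \<longleftrightarrow> (\<forall>P. lim_branch Ts P \<longrightarrow> closed_set (lim_content Ts ` P))"

end

theory Submission
  imports Defs
begin

(* Suppose A fails at a world x of an ILX-model. Call a set of labelled formulas faithful if its
   labels can be mapped to worlds so that a label created as \<sigma>Rn (resp. \<sigma>S\<^sub>\<rho>n) goes to an
   R-successor of the image of \<sigma> (resp. an S-successor of it w.r.t. the image of \<rho>) and every
   formula holds at the image of its label. Along such a map the relations R\<^sup>\<Lambda>, S\<^sup>\<Lambda> hold in the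
   model: closure conditions (1)-(7) by the IL-frame conditions and (8) because the model
   satisfies C. Hence every rule applied to a faithful branch has a faithful extension; for the
   rules creating a label the witness world is chosen R-maximal, which exists as R is Noetherian
   and makes the accompanying box formula true there. Starting from the branch 0::\<not>A, each stage
   thus has a faithful leaf extending the one of the previous stage. These leaves span a branch of
   the limit tableau, which is closed; so some stage has a faithful closed branch, which is absurd. *)

section \<open>Stages of the tableau as finite trees\<close>

definition wf_tableau :: "tableau \<Rightarrow> bool" where
  "wf_tableau T \<longleftrightarrow> T [] \<noteq> None \<and>
     (\<forall>r s. T r \<noteq> None \<longrightarrow> prefix s r \<longrightarrow> T s \<noteq> None) \<and>
     (\<forall>r s. T r \<noteq> None \<longrightarrow> strict_prefix s r \<longrightarrow> T (s @ [0]) \<noteq> None)"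

definition extend_tab :: "horn set \<Rightarrow> tableau \<Rightarrow> nat list \<Rightarrow> label \<Rightarrow> efm \<Rightarrow> (nat list \<Rightarrow> pat)
    \<Rightarrow> tableau" where
  "extend_tab C T p \<sigma> A P = (\<lambda>r.
     if \<exists>q. is_leaf T q \<and> prefix p q \<and> strict_prefix q r then
       (let q = (SOME q. is_leaf T q \<and> prefix p q \<and> strict_prefix q r)
        in map_option (\<lambda>(\<tau>, B). (\<tau>, B, Awake)) (patmap (P q) (drop (length q) r)))
     else (case T r of
             None \<Rightarrow> None
           | Some (\<tau>, B, m) \<Rightarrow>
               Some (\<tau>, B, if r = p then new_mark A
                            else if reawake C T p \<sigma> A r then Awake else m)))"

lemma sys_step_cases:
  assumes "sys_step C T T'"
  shows "T' = T \<or> (\<exists>p \<sigma> A P. T p = Some (\<sigma>, A, Awake) \<and>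
           (\<forall>q. is_leaf T q \<and> prefix p q \<longrightarrow> rule_pat C T q \<sigma> A (P q)) \<and>
           T' = extend_tab C T p \<sigma> A P)"
  using assms unfolding sys_step_def extend_tab_def by blast

lemma leaf_prefix_leaf:
  assumes "wf_tableau T" "is_leaf T a" "is_leaf T b" "prefix a b"
  shows "a = b"
  using assms unfolding wf_tableau_def is_leaf_def strict_prefix_def by blast

lemma prefix_of_leaf_defined:
  assumes "wf_tableau T" "is_leaf T q" "prefix r q"
  shows "T r \<noteq> None"
  using assms unfolding wf_tableau_def is_leaf_def by blast

lemma no_node_below_leaf:
  assumes "wf_tableau T" "T r \<noteq> None" "is_leaf T q"
  shows "\<not> strict_prefix q r"
  using assms unfolding wf_tableau_def is_leaf_def by blast

lemma extend_tab_old: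
  assumes "wf_tableau T" "T r = Some (\<tau>, B, m)"
  shows "\<exists>m'. extend_tab C T p \<sigma> A P r = Some (\<tau>, B, m')"
proof -
  have outside: "\<not> (\<exists>q. is_leaf T q \<and> prefix p q \<and> strict_prefix q r)"
    using no_node_below_leaf[OF assms(1)] assms(2) by blast
  show ?thesis using assms(2) unfolding extend_tab_def if_not_P[OF outside] by simp
qed

lemma extend_tab_old_defined:
  "wf_tableau T \<Longrightarrow> T r \<noteq> None \<Longrightarrow> extend_tab C T p \<sigma> A P r \<noteq> None"
  using extend_tab_old by fastforce

lemma extend_tab_new:
  assumes "wf_tableau T" "is_leaf T q" "prefix p q" "d \<noteq> []"
  shows "extend_tab C T p \<sigma> A P (q @ d) = map_option (\<lambda>(\<tau>, B). (\<tau>, B, Awake)) (patmap (P q) d)"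
proof -
  have below: "strict_prefix q (q @ d)" using assms(4) by (simp add: strict_prefix_def)
  then have ex: "\<exists>q'. is_leaf T q' \<and> prefix p q' \<and> strict_prefix q' (q @ d)"
    using assms by blast
  define q' where "q' = (SOME q'. is_leaf T q' \<and> prefix p q' \<and> strict_prefix q' (q @ d))"
  have q': "is_leaf T q' \<and> prefix p q' \<and> strict_prefix q' (q @ d)"
    unfolding q'_def by (rule someI_ex[OF ex])
  then have "prefix q' q \<or> prefix q q'"
    using below prefix_same_cases by (metis strict_prefix_def)
  then have "q' = q" using leaf_prefix_leaf[OF assms(1)] q' assms(2) by metis
  then show ?thesis unfolding extend_tab_def using ex q'_def by (simp add: Let_def)
qed

lemma extend_tab_defined_cases:
  assumes "extend_tab C T p \<sigma> A P r \<noteq> None"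
  shows "T r \<noteq> None \<or>
    (\<exists>q d. is_leaf T q \<and> prefix p q \<and> d \<noteq> [] \<and> r = q @ d \<and> patmap (P q) d \<noteq> None)"
proof (cases "\<exists>q. is_leaf T q \<and> prefix p q \<and> strict_prefix q r")
  case True
  define q where "q = (SOME q. is_leaf T q \<and> prefix p q \<and> strict_prefix q r)"
  have q: "is_leaf T q \<and> prefix p q \<and> strict_prefix q r"
    unfolding q_def by (rule someI_ex[OF True])
  then obtain d where d: "r = q @ d" "d \<noteq> []"
    by (metis append_Nil2 prefixE strict_prefix_def)
  have "patmap (P q) d \<noteq> None"
    using assms True d unfolding extend_tab_def q_def[symmetric] by (simp add: Let_def)
  then show ?thesis using q d by blast
next
  case False
  then show ?thesis
    using assms unfolding extend_tab_def if_not_P[OF False] by (auto split: option.splits)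
qed

lemma patmap_prefix_defined:
  assumes "patmap Pt d \<noteq> None" "prefix d' d" "d' \<noteq> []"
  shows "patmap Pt d' \<noteq> None"
proof -
  have "set d' \<subseteq> set d" "length d' \<le> length d"
    using assms(2) set_mono_prefix prefix_length_le by auto
  then show ?thesis using assms(1,3) by (cases Pt) (auto split: if_splits)
qed

lemma patmap_first_child_defined:
  assumes "patmap Pt d \<noteq> None" "strict_prefix d' d"
  shows "patmap Pt (d' @ [0]) \<noteq> None"
proof -
  have "length d' < length d" using assms(2) by (rule prefix_length_less)
  moreover have "set d' \<subseteq> set d"
    using assms(2) set_mono_prefix by (auto simp: strict_prefix_def)
  ultimately show ?thesis using assms(1) by (cases Pt) (auto split: if_splits)
qed

lemma extend_tab_prefix_closed:
  assumes wf: "wf_tableau T" and def: "extend_tab C T p \<sigma> A P r \<noteq> None" and s: "prefix s r"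
  shows "extend_tab C T p \<sigma> A P s \<noteq> None"
  using extend_tab_defined_cases[OF def]
proof
  assume "T r \<noteq> None"
  then show ?thesis using wf s extend_tab_old_defined unfolding wf_tableau_def by blast
next
  assume "\<exists>q d. is_leaf T q \<and> prefix p q \<and> d \<noteq> [] \<and> r = q @ d \<and> patmap (P q) d \<noteq> None"
  then obtain q d where q: "is_leaf T q" "prefix p q" "r = q @ d" "patmap (P q) d \<noteq> None"
    by blast
  have Tq: "T q \<noteq> None" using q(1) by (simp add: is_leaf_def)
  from s q(3) consider "prefix s q" | us where "s = q @ us" "prefix us d" "us \<noteq> []"
    by (metis append.right_neutral prefix_append prefix_order.order_refl)
  then show ?thesis
  proof cases
    case 1
    then show ?thesis using wf Tq extend_tab_old_defined unfolding wf_tableau_def by blast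
  next
    case 2
    then show ?thesis
      using extend_tab_new[OF wf q(1,2)] patmap_prefix_defined[OF q(4)] by simp
  qed
qed

lemma extend_tab_first_child:
  assumes wf: "wf_tableau T" and def: "extend_tab C T p \<sigma> A P r \<noteq> None"
    and s: "strict_prefix s r"
  shows "extend_tab C T p \<sigma> A P (s @ [0]) \<noteq> None"
  using extend_tab_defined_cases[OF def]
proof
  assume "T r \<noteq> None"
  then show ?thesis using wf s extend_tab_old_defined unfolding wf_tableau_def by blast
next
  assume "\<exists>q d. is_leaf T q \<and> prefix p q \<and> d \<noteq> [] \<and> r = q @ d \<and> patmap (P q) d \<noteq> None"
  then obtain q d where q: "is_leaf T q" "prefix p q" "d \<noteq> []" "r = q @ d"
      "patmap (P q) d \<noteq> None"
    by blast
  have Tq: "T q \<noteq> None" using q(1) by (simp add: is_leaf_def)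
  from s q(3,4) consider "strict_prefix s q" | us where "s = q @ us" "strict_prefix us d"
    by (metis prefix_append prefix_bot.not_eq_extremum self_append_conv strict_prefix_def)
  then show ?thesis
  proof cases
    case 1
    then show ?thesis using wf Tq extend_tab_old_defined unfolding wf_tableau_def by blast
  next
    case 2
    then show ?thesis
      using extend_tab_new[OF wf q(1,2)] patmap_first_child_defined[OF q(5)] by simp
  qed
qed

lemma wf_extend_tab:
  assumes "wf_tableau T"
  shows "wf_tableau (extend_tab C T p \<sigma> A P)"
  unfolding wf_tableau_def
proof (intro conjI allI impI)
  show "extend_tab C T p \<sigma> A P [] \<noteq> None"
    using assms extend_tab_old_defined unfolding wf_tableau_def by blast
qed (use extend_tab_prefix_closed[OF assms] extend_tab_first_child[OF assms] in blast)+

lemma wf_init_tab: "wf_tableau (init_tab A)"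
  unfolding wf_tableau_def init_tab_def by (auto simp: strict_prefix_def)

lemma wf_sys_step: "wf_tableau T \<Longrightarrow> sys_step C T T' \<Longrightarrow> wf_tableau T'"
  using sys_step_cases wf_extend_tab by metis

lemma sys_step_keeps_node:
  assumes "wf_tableau T" "sys_step C T T'" "T r = Some (\<tau>, B, m)"
  shows "\<exists>m'. T' r = Some (\<tau>, B, m')"
  using sys_step_cases[OF assms(2)] extend_tab_old[OF assms(1,3)] assms(3) by metis

lemma systematic_wf:
  assumes "systematic_tableau C A Ts"
  shows "wf_tableau (Ts i)"
proof (induction i)
  case 0
  then show ?case using assms wf_init_tab unfolding systematic_tableau_def by simp
next
  case (Suc i)
  then show ?case using assms wf_sys_step unfolding systematic_tableau_def by blast
qed

lemma systematic_keeps_node: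
  assumes sys: "systematic_tableau C A Ts" and "Ts i r = Some (\<tau>, B, m)" and "i \<le> j"
  shows "\<exists>m'. Ts j r = Some (\<tau>, B, m')"
  using \<open>i \<le> j\<close>
proof (induction j rule: dec_induct)
  case base
  then show ?case using assms(2) by blast
next
  case (step j)
  then show ?case
    using sys_step_keeps_node[OF systematic_wf[OF sys]] sys unfolding systematic_tableau_def
    by blast
qed

(* d leads from a leaf of the old tableau to a leaf of the pattern appended below it *)
definition pat_path :: "pat \<Rightarrow> nat list \<Rightarrow> bool" where
  "pat_path Pt d \<longleftrightarrow> (d = [] \<or> patmap Pt d \<noteq> None) \<and> patmap Pt (d @ [0]) = None"

definition pat_fms :: "pat \<Rightarrow> nat list \<Rightarrow> (label \<times> efm) set" where
  "pat_fms Pt d = {x. \<exists>d'. prefix d' d \<and> d' \<noteq> [] \<and> patmap Pt d' = Some x}"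

lemma is_leaf_extend_tab_other:
  assumes wf: "wf_tableau T" and leaf: "is_leaf T q" and "\<not> prefix p q"
  shows "is_leaf (extend_tab C T p \<sigma> A P) q"
proof -
  have "extend_tab C T p \<sigma> A P (q @ [0]) = None"
  proof (rule ccontr)
    assume "extend_tab C T p \<sigma> A P (q @ [0]) \<noteq> None"
    moreover have "T (q @ [0]) = None" using leaf by (simp add: is_leaf_def)
    ultimately obtain q' d where "is_leaf T q'" "prefix p q'" "d \<noteq> []" "q @ [0] = q' @ d"
      using extend_tab_defined_cases by blast
    moreover from this have "prefix q' q" by (metis prefixI prefix_snoc same_prefix_nil)
    ultimately show False using leaf_prefix_leaf[OF wf _ leaf] \<open>\<not> prefix p q\<close> by blast
  qed
  then show ?thesis using extend_tab_old_defined[OF wf] leaf by (simp add: is_leaf_def)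
qed

lemma is_leaf_extend_tab_new:
  assumes "wf_tableau T" "is_leaf T q" "prefix p q" "pat_path (P q) d"
  shows "is_leaf (extend_tab C T p \<sigma> A P) (q @ d)"
  using assms extend_tab_new[OF assms(1-3)] extend_tab_old_defined[OF assms(1)]
  unfolding pat_path_def is_leaf_def by (cases "d = []") auto

lemma branch_fms_extend_tab_old:
  assumes wf: "wf_tableau T" and "T q \<noteq> None"
  shows "branch_fms (extend_tab C T p \<sigma> A P) q = branch_fms T q"
proof -
  have "(\<exists>m. extend_tab C T p \<sigma> A P s = Some (\<tau>, B, m)) \<longleftrightarrow> (\<exists>m. T s = Some (\<tau>, B, m))"
    if "prefix s q" for s \<tau> B
  proof -
    have "T s \<noteq> None" using assms that unfolding wf_tableau_def by blast
    then obtain \<tau>' B' m' where "T s = Some (\<tau>', B', m')" by auto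
    with extend_tab_old[OF wf this, of C p \<sigma> A P] show ?thesis by auto
  qed
  then show ?thesis unfolding branch_fms_def by blast
qed

lemma branch_fms_append:
  "branch_fms T (q @ d) =
     branch_fms T q \<union> {(\<tau>, B). \<exists>us m. prefix us d \<and> us \<noteq> [] \<and> T (q @ us) = Some (\<tau>, B, m)}"
  unfolding branch_fms_def prefix_append by (auto 4 4)

lemma branch_fms_extend_tab_new:
  assumes wf: "wf_tableau T" and leaf: "is_leaf T q" and "prefix p q"
  shows "branch_fms (extend_tab C T p \<sigma> A P) (q @ d) = branch_fms T q \<union> pat_fms (P q) d"
proof -
  have "branch_fms (extend_tab C T p \<sigma> A P) q = branch_fms T q"
    using branch_fms_extend_tab_old[OF wf] leaf by (simp add: is_leaf_def)
  moreover have "(\<exists>m. extend_tab C T p \<sigma> A P (q @ us) = Some (\<tau>, B, m)) \<longleftrightarrow>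
      patmap (P q) us = Some (\<tau>, B)" if "us \<noteq> []" for us \<tau> B
    using extend_tab_new[OF assms that] by auto
  ultimately show ?thesis unfolding branch_fms_append pat_fms_def by (auto; metis)
qed

lemma patmap_Chain_mem: "patmap (Chain xs) d = Some x \<Longrightarrow> x \<in> set xs"
  by (cases d) (auto split: if_splits)

lemma last_prefix_nth:
  assumes "prefix d bs" "d \<noteq> []"
  shows "last d = bs ! (length d - 1)"
proof -
  obtain t where "bs = d @ t" using assms(1) by (rule prefixE)
  then show ?thesis using assms(2) by (simp add: last_conv_nth nth_append)
qed

lemma pat_path_Chain: "pat_path (Chain xs) (replicate (length xs) 0)"
  unfolding pat_path_def by auto

lemma pat_fms_Chain: "pat_fms (Chain xs) (replicate (length xs) 0) = set xs"
proof (rule set_eqI, rule iffI)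
  fix x assume "x \<in> pat_fms (Chain xs) (replicate (length xs) 0)"
  then obtain d' where d': "prefix d' (replicate (length xs) 0)" "d' \<noteq> []"
      "patmap (Chain xs) d' = Some x"
    unfolding pat_fms_def by blast
  then show "x \<in> set xs" using patmap_Chain_mem by blast
next
  fix x assume "x \<in> set xs"
  then obtain i where i: "i < length xs" "x = xs ! i" by (auto simp: in_set_conv_nth)
  have "prefix (replicate (Suc i) (0::nat)) (replicate (length xs) 0)"
    using i(1) by (metis Suc_leI le_add_diff_inverse prefixI replicate_add)
  moreover have "patmap (Chain xs) (replicate (Suc i) 0) = Some x"
    using i by (simp del: replicate_Suc)
  moreover have "replicate (Suc i) (0::nat) \<noteq> []" by (simp del: replicate_Suc)
  ultimately show "x \<in> pat_fms (Chain xs) (replicate (length xs) 0)"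
    unfolding pat_fms_def by blast
qed

lemma pat_path_Splits:
  "length bs = length ps \<Longrightarrow> set bs \<subseteq> {0, 1} \<Longrightarrow> pat_path (Splits ps) bs"
  unfolding pat_path_def by auto

lemma pat_fms_Splits:
  assumes "length bs = length ps" "x \<in> pat_fms (Splits ps) bs"
  shows "\<exists>i<length ps. x = (if bs ! i = 0 then fst (ps ! i) else snd (ps ! i))"
proof -
  obtain d where d: "prefix d bs" "d \<noteq> []" "patmap (Splits ps) d = Some x"
    using assms(2) unfolding pat_fms_def by blast
  define i where "i = length d - 1"
  have "i < length ps"
    using d(2) prefix_length_le[OF d(1)] assms(1) unfolding i_def by (cases d) auto
  moreover have "last d = bs ! i" unfolding i_def using last_prefix_nth[OF d(1,2)] .
  moreover have "x = (if last d = 0 then fst (ps ! i) else snd (ps ! i))"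
    using d(3) unfolding i_def by (simp split: if_split_asm)
  ultimately show ?thesis by auto
qed

lemma finite_branch_fms: "finite (branch_fms T q)"
proof -
  have "branch_fms T q \<subseteq> (\<lambda>s. (fst (the (T s)), fst (snd (the (T s))))) ` set (prefixes q)"
    unfolding branch_fms_def by force
  then show ?thesis by (rule finite_subset) simp
qed

lemma fresh_LR:
  assumes "finite L"
  shows "LR \<sigma> (LEAST n. LR \<sigma> n \<notin> L) \<notin> L"
proof -
  have "finite (LR \<sigma> -` L)" by (rule finite_vimageI[OF assms]) (simp add: inj_def)
  then obtain n where "LR \<sigma> n \<notin> L" using ex_new_if_finite[OF infinite_UNIV_nat] by blast
  then show ?thesis by (rule LeastI)
qed

lemma fresh_LS:
  assumes "finite L"
  shows "LS \<sigma> \<rho> (LEAST n. LS \<sigma> \<rho> n \<notin> L) \<notin> L"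
proof -
  have "finite (LS \<sigma> \<rho> -` L)" by (rule finite_vimageI[OF assms]) (simp add: inj_def)
  then obtain n where "LS \<sigma> \<rho> n \<notin> L" using ex_new_if_finite[OF infinite_UNIV_nat] by blast
  then show ?thesis by (rule LeastI)
qed

fun eforces :: "('w \<Rightarrow> 'w \<Rightarrow> bool) \<Rightarrow> ('w \<Rightarrow> 'w \<Rightarrow> 'w \<Rightarrow> bool) \<Rightarrow> (nat \<Rightarrow> 'w \<Rightarrow> bool)
    \<Rightarrow> (label \<Rightarrow> 'w) \<Rightarrow> 'w \<Rightarrow> efm \<Rightarrow> bool" where
  "eforces R S V f x (EVar p) = V p x"
| "eforces R S V f x (ENeg A) = (\<not> eforces R S V f x A)"
| "eforces R S V f x (EImp A B) = (eforces R S V f x A \<longrightarrow> eforces R S V f x B)"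
| "eforces R S V f x (EBox A) = (\<forall>y. R x y \<longrightarrow> eforces R S V f y A)"
| "eforces R S V f x (ERhd A B) =
     (\<forall>y. R x y \<longrightarrow> eforces R S V f y A \<longrightarrow> (\<exists>z. S x y z \<and> eforces R S V f z B))"
| "eforces R S V f x (EBoxL \<rho> A) = (\<forall>z. S (f \<rho>) x z \<longrightarrow> eforces R S V f z A)"

fun elabels :: "efm \<Rightarrow> label set" where
  "elabels (EVar p) = {}"
| "elabels (ENeg A) = elabels A"
| "elabels (EImp A B) = elabels A \<union> elabels B"
| "elabels (EBox A) = elabels A"
| "elabels (ERhd A B) = elabels A \<union> elabels B"
| "elabels (EBoxL \<rho> A) = insert \<rho> (elabels A)"

lemma eforces_emb: "eforces R S V f x (emb A) = forces R S V x A"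
  by (induction A arbitrary: x) auto

lemma elabels_emb: "elabels (emb A) = {}"
  by (induction A) auto

lemma eforces_cong:
  "(\<And>\<rho>. \<rho> \<in> elabels A \<Longrightarrow> f \<rho> = g \<rho>) \<Longrightarrow> eforces R S V f x A = eforces R S V g x A"
  by (induction A arbitrary: x) auto

definition interprets :: "'w set \<Rightarrow> ('w \<Rightarrow> 'w \<Rightarrow> bool) \<Rightarrow> ('w \<Rightarrow> 'w \<Rightarrow> 'w \<Rightarrow> bool)
    \<Rightarrow> label set \<Rightarrow> (label \<Rightarrow> 'w) \<Rightarrow> bool" where
  "interprets W R S L f \<longleftrightarrow> (\<forall>\<tau>\<in>L. f \<tau> \<in> W) \<and>
     (\<forall>\<sigma> n. LR \<sigma> n \<in> L \<longrightarrow> \<sigma> \<in> L \<and> R (f \<sigma>) (f (LR \<sigma> n))) \<and>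
     (\<forall>\<sigma> \<rho> n. LS \<sigma> \<rho> n \<in> L \<longrightarrow> \<sigma> \<in> L \<and> \<rho> \<in> L \<and> S (f \<rho>) (f \<sigma>) (f (LS \<sigma> \<rho> n)))"

lemma interpretsD:
  assumes "interprets W R S L f"
  shows interprets_in_W: "\<tau> \<in> L \<Longrightarrow> f \<tau> \<in> W"
    and interprets_LR: "LR \<sigma> n \<in> L \<Longrightarrow> \<sigma> \<in> L \<and> R (f \<sigma>) (f (LR \<sigma> n))"
    and interprets_LS: "LS \<sigma> \<rho> n \<in> L \<Longrightarrow> \<sigma> \<in> L \<and> \<rho> \<in> L \<and> S (f \<rho>) (f \<sigma>) (f (LS \<sigma> \<rho> n))"
  using assms unfolding interprets_def by blast+

lemma interprets_insert_LR:
  assumes f: "interprets W R S L f" and "LR \<sigma> n \<notin> L" "\<sigma> \<in> L" "w \<in> W" "R (f \<sigma>) w"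
  shows "interprets W R S (insert (LR \<sigma> n) L) (f(LR \<sigma> n := w))"
proof -
  let ?g = "f(LR \<sigma> n := w)"
  have old: "?g \<tau> = f \<tau>" if "\<tau> \<in> L" for \<tau> using assms(2) that by auto
  note simps = old fun_upd_same interprets_in_W[OF f]
  have "?g \<tau> \<in> W" if "\<tau> \<in> insert (LR \<sigma> n) L" for \<tau>
    using that assms(4) by (auto simp del: fun_upd_apply simp add: simps)
  moreover have "\<sigma>' \<in> insert (LR \<sigma> n) L \<and> R (?g \<sigma>') (?g (LR \<sigma>' n'))"
    if "LR \<sigma>' n' \<in> insert (LR \<sigma> n) L" for \<sigma>' n'
  proof (cases "LR \<sigma>' n' \<in> L")
    case True
    with interprets_LR[OF f True] show ?thesis by (simp del: fun_upd_apply add: simps)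
  next
    case False
    then have "\<sigma>' = \<sigma>" "n' = n" using that by auto
    then show ?thesis using assms(3,5) by (simp del: fun_upd_apply add: simps)
  qed
  moreover have "\<sigma>' \<in> insert (LR \<sigma> n) L \<and> \<rho>' \<in> insert (LR \<sigma> n) L \<and>
      S (?g \<rho>') (?g \<sigma>') (?g (LS \<sigma>' \<rho>' n'))"
    if "LS \<sigma>' \<rho>' n' \<in> insert (LR \<sigma> n) L" for \<sigma>' \<rho>' n'
  proof -
    have "LS \<sigma>' \<rho>' n' \<in> L" using that by blast
    with interprets_LS[OF f this] show ?thesis by (simp del: fun_upd_apply add: simps)
  qed
  ultimately show ?thesis unfolding interprets_def by blast
qed

lemma interprets_insert_LS:
  assumes f: "interprets W R S L f" and "LS \<sigma> \<rho> n \<notin> L" "\<sigma> \<in> L" "\<rho> \<in> L" "w \<in> W"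
    "S (f \<rho>) (f \<sigma>) w"
  shows "interprets W R S (insert (LS \<sigma> \<rho> n) L) (f(LS \<sigma> \<rho> n := w))"
proof -
  let ?g = "f(LS \<sigma> \<rho> n := w)"
  have old: "?g \<tau> = f \<tau>" if "\<tau> \<in> L" for \<tau> using assms(2) that by auto
  note simps = old fun_upd_same interprets_in_W[OF f]
  have "?g \<tau> \<in> W" if "\<tau> \<in> insert (LS \<sigma> \<rho> n) L" for \<tau>
    using that assms(5) by (auto simp del: fun_upd_apply simp add: simps)
  moreover have "\<sigma>' \<in> insert (LS \<sigma> \<rho> n) L \<and> R (?g \<sigma>') (?g (LR \<sigma>' n'))"
    if "LR \<sigma>' n' \<in> insert (LS \<sigma> \<rho> n) L" for \<sigma>' n'
  proof -
    have "LR \<sigma>' n' \<in> L" using that by blast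
    with interprets_LR[OF f this] show ?thesis by (simp del: fun_upd_apply add: simps)
  qed
  moreover have "\<sigma>' \<in> insert (LS \<sigma> \<rho> n) L \<and> \<rho>' \<in> insert (LS \<sigma> \<rho> n) L \<and>
      S (?g \<rho>') (?g \<sigma>') (?g (LS \<sigma>' \<rho>' n'))"
    if "LS \<sigma>' \<rho>' n' \<in> insert (LS \<sigma> \<rho> n) L" for \<sigma>' \<rho>' n'
  proof (cases "LS \<sigma>' \<rho>' n' \<in> L")
    case True
    with interprets_LS[OF f True] show ?thesis by (simp del: fun_upd_apply add: simps)
  next
    case False
    then have "\<sigma>' = \<sigma>" "\<rho>' = \<rho>" "n' = n" using that by auto
    then show ?thesis using assms(3,4,6) by (simp del: fun_upd_apply add: simps)
  qed
  ultimately show ?thesis unfolding interprets_def by blast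
qed

fun rholds :: "('w \<Rightarrow> 'w \<Rightarrow> bool) \<Rightarrow> ('w \<Rightarrow> 'w \<Rightarrow> 'w \<Rightarrow> bool) \<Rightarrow> (label \<Rightarrow> 'w) \<Rightarrow> ratom \<Rightarrow> bool"
  where
  "rholds R S f (RA a b) = R (f a) (f b)"
| "rholds R S f (SA a b c) = S (f a) (f b) (f c)"

lemma hholds_comp: "hholds R S (f \<circ> v) a = rholds R S f (hinst v a)"
  by (cases a) auto

locale horn_model =
  fixes C :: "horn set" and W :: "'w set" and R :: "'w \<Rightarrow> 'w \<Rightarrow> bool"
    and S :: "'w \<Rightarrow> 'w \<Rightarrow> 'w \<Rightarrow> bool" and V :: "nat \<Rightarrow> 'w \<Rightarrow> bool"
  assumes model: "ILX_model C W R S V"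
begin

lemma IL_frame: "IL_frame W R S"
  using model unfolding ILX_model_def by blast

lemma R_trans: "R x y \<Longrightarrow> R y z \<Longrightarrow> R x z"
  using IL_frame unfolding IL_frame_def by blast

lemma S_imp_R_left: "S x y z \<Longrightarrow> R x y"
  using IL_frame unfolding IL_frame_def by blast

lemma S_imp_R_right: "S x y z \<Longrightarrow> R x z"
  using IL_frame unfolding IL_frame_def by blast

lemma S_refl: "R x y \<Longrightarrow> S x y y"
  using IL_frame unfolding IL_frame_def by blast

lemma S_trans: "S x y z \<Longrightarrow> S x z u \<Longrightarrow> S x y u"
  using IL_frame unfolding IL_frame_def by blast

lemma R_R_imp_S: "R x y \<Longrightarrow> R y z \<Longrightarrow> S x y z"
  using IL_frame unfolding IL_frame_def by blast

lemma R_imp_in_W: "R x y \<Longrightarrow> y \<in> W"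
  using IL_frame unfolding IL_frame_def by blast

lemma R_maximal:
  assumes "y \<in> U"
  obtains y' where "y' \<in> U" "\<And>z. R y' z \<Longrightarrow> z \<notin> U"
proof -
  have "\<not> (\<exists>f :: nat \<Rightarrow> 'w. \<forall>i. R (f i) (f (Suc i)))"
    using IL_frame unfolding IL_frame_def by blast
  then have "wf {(z, y). R y z}"
    unfolding wf_iff_no_infinite_down_chain by simp
  then show ?thesis
  proof (rule wfE_min[OF _ assms])
    fix y' assume "y' \<in> U" "\<And>z. (z, y') \<in> {(z, y). R y z} \<Longrightarrow> z \<notin> U"
    then show ?thesis using that by blast
  qed
qed

lemma lrel_sound:
  assumes f: "interprets W R S L f"
  shows "lrel L C a \<Longrightarrow> rholds R S f a"
proof (induction rule: lrel.induct)
  case (c1 \<sigma> n)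
  then show ?case using interprets_LR[OF f c1(2)] by simp
next
  case (c3 \<sigma> \<rho> n)
  then show ?case using interprets_LS[OF f c3(3)] by simp
next
  case (c8 h v)
  have "\<forall>i. (f \<circ> v) i \<in> W" using c8(2) interprets_in_W[OF f] by simp
  moreover have "\<forall>a\<in>set (fst h). hholds R S (f \<circ> v) a" using c8(3) by (simp add: hholds_comp)
  ultimately have "hholds R S (f \<circ> v) (snd h)"
    using model c8(1) unfolding ILX_model_def horn_sat_def by blast
  then show ?case by (simp add: hholds_comp)
next
  case (c2 a b c)
  then show ?case using R_trans[of "f a" "f b" "f c"] by simp
next
  case (c4 \<sigma> \<tau>)
  then show ?case using S_refl[of "f \<sigma>" "f \<tau>"] by simp
next
  case (c5 \<rho> \<sigma> \<tau>)
  then show ?case using R_R_imp_S[of "f \<rho>" "f \<sigma>" "f \<tau>"] by simp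
next
  case (c6 \<rho> \<sigma> \<tau> \<upsilon>)
  then show ?case using S_trans[of "f \<rho>" "f \<sigma>" "f \<tau>" "f \<upsilon>"] by simp
next
  case (c7a \<rho> \<sigma> \<tau>)
  then show ?case using S_imp_R_left[of "f \<rho>" "f \<sigma>" "f \<tau>"] by simp
next
  case (c7b \<rho> \<sigma> \<tau>)
  then show ?case using S_imp_R_right[of "f \<rho>" "f \<sigma>" "f \<tau>"] by simp
qed

lemma neg_box_witness:
  assumes "\<not> eforces R S V f x (EBox B)"
  obtains y where "R x y" "\<not> eforces R S V f y B" "eforces R S V f y (EBox B)"
proof -
  let ?U = "{y. R x y \<and> \<not> eforces R S V f y B}"
  obtain y0 where "y0 \<in> ?U" using assms by auto
  then obtain y where y: "y \<in> ?U" and max: "\<And>z. R y z \<Longrightarrow> z \<notin> ?U"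
    by (rule R_maximal) blast
  have "eforces R S V f z B" if "R y z" for z
    using max[OF that] R_trans[OF _ that] y by blast
  then show ?thesis using y by (intro that) auto
qed

lemma neg_boxL_witness:
  assumes "\<not> eforces R S V f x (EBoxL \<rho> B)"
  obtains y where "S (f \<rho>) x y" "\<not> eforces R S V f y B" "eforces R S V f y (EBox B)"
proof -
  let ?U = "{y. S (f \<rho>) x y \<and> \<not> eforces R S V f y B}"
  obtain y0 where "y0 \<in> ?U" using assms by auto
  then obtain y where y: "y \<in> ?U" and max: "\<And>z. R y z \<Longrightarrow> z \<notin> ?U"
    by (rule R_maximal) blast
  have "eforces R S V f z B" if "R y z" for z
  proof -
    have "S (f \<rho>) y z" using y S_imp_R_right R_R_imp_S that by blast
    then have "S (f \<rho>) x z" using y S_trans by blast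
    then show ?thesis using max[OF that] by blast
  qed
  then show ?thesis using y by (intro that) auto
qed

lemma neg_rhd_witness:
  assumes "\<not> eforces R S V f x (ERhd B D)"
  obtains y where "R x y" "eforces R S V f y B" "\<forall>z. S x y z \<longrightarrow> \<not> eforces R S V f z D"
    "eforces R S V f y (EBox (ENeg B))"
proof -
  let ?U = "{y. R x y \<and> eforces R S V f y B \<and> (\<forall>z. S x y z \<longrightarrow> \<not> eforces R S V f z D)}"
  obtain y0 where "y0 \<in> ?U" using assms by auto
  then obtain y where y: "y \<in> ?U" and max: "\<And>z. R y z \<Longrightarrow> z \<notin> ?U"
    by (rule R_maximal) blast
  have "\<not> eforces R S V f z B" if "R y z" for z
  proof
    assume B: "eforces R S V f z B"
    have "S x y z" using y R_R_imp_S that by blast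
    then have "\<forall>u. S x z u \<longrightarrow> \<not> eforces R S V f u D" using y S_trans by blast
    moreover have "R x z" using y R_trans that by blast
    ultimately show False using max[OF that] B by blast
  qed
  then show ?thesis using y by (intro that) auto
qed

section \<open>Faithful branches\<close>

definition faithful_fm :: "(label \<times> efm) set \<Rightarrow> (label \<Rightarrow> 'w) \<Rightarrow> label \<times> efm \<Rightarrow> bool" where
  "faithful_fm F f x \<longleftrightarrow> fst x \<in> fst ` F \<and> elabels (snd x) \<subseteq> fst ` F \<and>
     eforces R S V f (f (fst x)) (snd x)"

definition faithful :: "(label \<times> efm) set \<Rightarrow> (label \<Rightarrow> 'w) \<Rightarrow> bool" where
  "faithful F f \<longleftrightarrow> interprets W R S (fst ` F) f \<and> (\<forall>x\<in>F. faithful_fm F f x)"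

lemma faithful_mem: "faithful F f \<Longrightarrow> (\<sigma>, A) \<in> F \<Longrightarrow> faithful_fm F f (\<sigma>, A)"
  unfolding faithful_def by blast

lemma faithful_interprets: "faithful F f \<Longrightarrow> interprets W R S (fst ` F) f"
  unfolding faithful_def by blast

lemma faithful_not_closed:
  assumes "faithful F f"
  shows "\<not> closed_set F"
proof
  assume "closed_set F"
  then obtain \<sigma> A where "faithful_fm F f (\<sigma>, A)" "faithful_fm F f (\<sigma>, ENeg A)"
    using faithful_mem[OF assms] unfolding closed_set_def by blast
  then show False unfolding faithful_fm_def by simp
qed

lemma faithful_Un:
  assumes "faithful F f" "\<forall>x\<in>G. faithful_fm F f x"
  shows "faithful (F \<union> G) f"
proof -
  have "fst ` (F \<union> G) = fst ` F" using assms(2) unfolding faithful_fm_def by auto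
  then show ?thesis using assms unfolding faithful_def faithful_fm_def by auto
qed

definition extends_faithfully :: "(label \<times> efm) set \<Rightarrow> pat \<Rightarrow> bool" where
  "extends_faithfully F Pt \<longleftrightarrow> (\<exists>d f. pat_path Pt d \<and> faithful (F \<union> pat_fms Pt d) f)"

lemma extends_faithfully_Chain:
  assumes "faithful F f" "\<forall>x\<in>set xs. faithful_fm F f x"
  shows "extends_faithfully F (Chain xs)"
proof -
  have "faithful (F \<union> pat_fms (Chain xs) (replicate (length xs) 0)) f"
    using faithful_Un[OF assms] by (simp add: pat_fms_Chain)
  then show ?thesis using pat_path_Chain unfolding extends_faithfully_def by blast
qed

lemma extends_faithfully_Splits:
  assumes "faithful F f"
    and "\<forall>i<length ps. faithful_fm F f (fst (ps ! i)) \<or> faithful_fm F f (snd (ps ! i))"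
  shows "extends_faithfully F (Splits ps)"
proof -
  define bs where
    "bs = map (\<lambda>i. if faithful_fm F f (fst (ps ! i)) then 0 else 1::nat) [0..<length ps]"
  have len: "length bs = length ps" and "set bs \<subseteq> {0, 1}" unfolding bs_def by auto
  then have "pat_path (Splits ps) bs" by (rule pat_path_Splits)
  moreover have "\<forall>x\<in>pat_fms (Splits ps) bs. faithful_fm F f x"
  proof
    fix x assume "x \<in> pat_fms (Splits ps) bs"
    then obtain i where "i < length ps" "x = (if bs ! i = 0 then fst (ps ! i) else snd (ps ! i))"
      using pat_fms_Splits[OF len] by blast
    then show "faithful_fm F f x" using assms(2) unfolding bs_def by auto
  qed
  ultimately show ?thesis using faithful_Un[OF assms(1)] unfolding extends_faithfully_def by blast
qed

lemma extends_faithfully_fresh: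
  assumes F: "faithful F f" and \<nu>: "\<nu> \<notin> fst ` F"
    and interp: "interprets W R S (insert \<nu> (fst ` F)) (f(\<nu> := w))"
    and "Bs \<noteq> []" and Bs: "\<forall>B\<in>set Bs. elabels B \<subseteq> fst ` F \<and> eforces R S V f w B"
  shows "extends_faithfully F (Chain (map (Pair \<nu>) Bs))"
proof -
  let ?G = "set (map (Pair \<nu>) Bs)" and ?g = "f(\<nu> := w)"
  have labels: "fst ` (F \<union> ?G) = insert \<nu> (fst ` F)" using \<open>Bs \<noteq> []\<close> by (cases Bs) auto
  have agree: "eforces R S V ?g x B = eforces R S V f x B" if "elabels B \<subseteq> fst ` F" for x B
    by (rule eforces_cong) (use that \<nu> in auto)
  have "faithful_fm (F \<union> ?G) ?g x" if "x \<in> F \<union> ?G" for x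
  proof (cases "x \<in> F")
    case True
    then have "faithful_fm F f x" using F faithful_mem by (cases x) blast
    moreover have "fst x \<noteq> \<nu>" using True \<nu> by auto
    ultimately show ?thesis using agree unfolding faithful_fm_def labels by auto
  next
    case False
    then show ?thesis using that Bs agree unfolding faithful_fm_def labels by auto
  qed
  then have "faithful (F \<union> ?G) ?g" unfolding faithful_def labels using interp by blast
  then have "faithful (F \<union> pat_fms (Chain (map (Pair \<nu>) Bs))
      (replicate (length (map (Pair \<nu>) Bs)) 0)) ?g"
    by (simp only: pat_fms_Chain)
  then show ?thesis using pat_path_Chain unfolding extends_faithfully_def by blast
qed

section \<open>Soundness of the rules\<close>

lemma rule_box_sound:
  assumes F: "faithful F f" and mem: "(\<sigma>, EBox B) \<in> F"
    and ts: "set ts = {\<tau> \<in> fst ` F. lrel (fst ` F) C (RA \<sigma> \<tau>)}"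
  shows "extends_faithfully F (Chain (map (\<lambda>\<tau>. (\<tau>, B)) ts))"
proof (rule extends_faithfully_Chain[OF F], intro ballI)
  fix x assume "x \<in> set (map (\<lambda>\<tau>. (\<tau>, B)) ts)"
  then obtain \<tau> where x: "x = (\<tau>, B)" "\<tau> \<in> fst ` F" "lrel (fst ` F) C (RA \<sigma> \<tau>)"
    using ts by auto
  have "R (f \<sigma>) (f \<tau>)" using lrel_sound[OF faithful_interprets[OF F] x(3)] by simp
  then show "faithful_fm F f x" using faithful_mem[OF F mem] x(1,2) unfolding faithful_fm_def by simp
qed

lemma rule_boxL_sound:
  assumes F: "faithful F f" and mem: "(\<sigma>, EBoxL \<rho> B) \<in> F"
    and ts: "set ts = {\<tau> \<in> fst ` F. lrel (fst ` F) C (SA \<rho> \<sigma> \<tau>)}"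
  shows "extends_faithfully F (Chain (map (\<lambda>\<tau>. (\<tau>, B)) ts))"
proof (rule extends_faithfully_Chain[OF F], intro ballI)
  fix x assume "x \<in> set (map (\<lambda>\<tau>. (\<tau>, B)) ts)"
  then obtain \<tau> where x: "x = (\<tau>, B)" "\<tau> \<in> fst ` F" "lrel (fst ` F) C (SA \<rho> \<sigma> \<tau>)"
    using ts by auto
  have "S (f \<rho>) (f \<sigma>) (f \<tau>)" using lrel_sound[OF faithful_interprets[OF F] x(3)] by simp
  then show "faithful_fm F f x" using faithful_mem[OF F mem] x(1,2) unfolding faithful_fm_def by simp
qed

lemma rule_rhd_sound:
  assumes F: "faithful F f" and mem: "(\<sigma>, ERhd B D) \<in> F"
    and ts: "set ts = {\<tau> \<in> fst ` F. lrel (fst ` F) C (RA \<sigma> \<tau>)}"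
  shows "extends_faithfully F (Splits (map (\<lambda>\<tau>. ((\<tau>, ENeg B), (\<tau>, ENeg (EBoxL \<sigma> (ENeg D))))) ts))"
proof (rule extends_faithfully_Splits[OF F], intro allI impI)
  fix i assume "i < length (map (\<lambda>\<tau>. ((\<tau>, ENeg B), (\<tau>, ENeg (EBoxL \<sigma> (ENeg D))))) ts)"
  then have i: "i < length ts" by simp
  define \<tau> where "\<tau> = ts ! i"
  have \<tau>: "\<tau> \<in> fst ` F" "lrel (fst ` F) C (RA \<sigma> \<tau>)" using ts nth_mem[OF i] unfolding \<tau>_def by auto
  have "R (f \<sigma>) (f \<tau>)" using lrel_sound[OF faithful_interprets[OF F] \<tau>(2)] by simp
  then have "\<not> eforces R S V f (f \<tau>) B \<or> eforces R S V f (f \<tau>) (ENeg (EBoxL \<sigma> (ENeg D)))"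
    using faithful_mem[OF F mem] unfolding faithful_fm_def by auto
  then show "faithful_fm F f (fst (map (\<lambda>\<tau>. ((\<tau>, ENeg B), (\<tau>, ENeg (EBoxL \<sigma> (ENeg D))))) ts ! i)) \<or>
      faithful_fm F f (snd (map (\<lambda>\<tau>. ((\<tau>, ENeg B), (\<tau>, ENeg (EBoxL \<sigma> (ENeg D))))) ts ! i))"
    using faithful_mem[OF F mem] \<tau>(1) i unfolding faithful_fm_def \<tau>_def by auto
qed

lemma rule_neg_box_sound:
  assumes F: "faithful F f" and mem: "(\<sigma>, ENeg (EBox B)) \<in> F" and fresh: "LR \<sigma> n \<notin> fst ` F"
  shows "extends_faithfully F (Chain [(LR \<sigma> n, ENeg B), (LR \<sigma> n, EBox B)])"
proof -
  have e: "\<sigma> \<in> fst ` F" "elabels B \<subseteq> fst ` F" "\<not> eforces R S V f (f \<sigma>) (EBox B)"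
    using faithful_mem[OF F mem] unfolding faithful_fm_def by auto
  obtain y where y: "R (f \<sigma>) y" "\<not> eforces R S V f y B" "eforces R S V f y (EBox B)"
    using neg_box_witness[OF e(3)] by blast
  have "interprets W R S (insert (LR \<sigma> n) (fst ` F)) (f(LR \<sigma> n := y))"
    using interprets_insert_LR[OF faithful_interprets[OF F] fresh e(1) R_imp_in_W[OF y(1)] y(1)] .
  from extends_faithfully_fresh[OF F fresh this, of "[ENeg B, EBox B]"] show ?thesis
    using e(2) y(2,3) by simp
qed

lemma rule_neg_boxL_sound:
  assumes F: "faithful F f" and mem: "(\<sigma>, ENeg (EBoxL \<rho> B)) \<in> F"
    and fresh: "LS \<sigma> \<rho> n \<notin> fst ` F"
  shows "extends_faithfully F (Chain [(LS \<sigma> \<rho> n, ENeg B), (LS \<sigma> \<rho> n, EBox B)])"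
proof -
  have e: "\<sigma> \<in> fst ` F" "\<rho> \<in> fst ` F" "elabels B \<subseteq> fst ` F"
      "\<not> eforces R S V f (f \<sigma>) (EBoxL \<rho> B)"
    using faithful_mem[OF F mem] unfolding faithful_fm_def by auto
  obtain y where y: "S (f \<rho>) (f \<sigma>) y" "\<not> eforces R S V f y B" "eforces R S V f y (EBox B)"
    using neg_boxL_witness[OF e(4)] by blast
  have "y \<in> W" using R_imp_in_W[OF S_imp_R_right[OF y(1)]] .
  then have "interprets W R S (insert (LS \<sigma> \<rho> n) (fst ` F)) (f(LS \<sigma> \<rho> n := y))"
    using interprets_insert_LS[OF faithful_interprets[OF F] fresh e(1,2) _ y(1)] by blast
  from extends_faithfully_fresh[OF F fresh this, of "[ENeg B, EBox B]"] show ?thesis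
    using e(3) y(2,3) by simp
qed

lemma rule_neg_rhd_sound:
  assumes F: "faithful F f" and mem: "(\<sigma>, ENeg (ERhd B D)) \<in> F" and fresh: "LR \<sigma> n \<notin> fst ` F"
  shows "extends_faithfully F
    (Chain [(LR \<sigma> n, B), (LR \<sigma> n, EBoxL \<sigma> (ENeg D)), (LR \<sigma> n, EBox (ENeg B))])"
proof -
  have e: "\<sigma> \<in> fst ` F" "elabels B \<subseteq> fst ` F" "elabels D \<subseteq> fst ` F"
      "\<not> eforces R S V f (f \<sigma>) (ERhd B D)"
    using faithful_mem[OF F mem] unfolding faithful_fm_def by auto
  obtain y where y: "R (f \<sigma>) y" "eforces R S V f y B"
      "\<forall>z. S (f \<sigma>) y z \<longrightarrow> \<not> eforces R S V f z D" "eforces R S V f y (EBox (ENeg B))"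
    using neg_rhd_witness[OF e(4)] by blast
  have "interprets W R S (insert (LR \<sigma> n) (fst ` F)) (f(LR \<sigma> n := y))"
    using interprets_insert_LR[OF faithful_interprets[OF F] fresh e(1) R_imp_in_W[OF y(1)] y(1)] .
  from extends_faithfully_fresh[OF F fresh this, of "[B, EBoxL \<sigma> (ENeg D), EBox (ENeg B)]"]
  show ?thesis using e(1-3) y(2-4) by simp
qed

lemma rule_pat_neg_sound:
  assumes F: "faithful (branch_fms T q) f" and mem: "(\<sigma>, ENeg A) \<in> branch_fms T q"
    and rule: "rule_pat C T q \<sigma> (ENeg A) Pt"
  shows "extends_faithfully (branch_fms T q) Pt"
proof -
  let ?F = "branch_fms T q"
  have open_branch: "\<not> closed_set ?F" using faithful_not_closed[OF F] .
  have lab: "lab T q = fst ` ?F" by (simp add: lab_def)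
  have fin: "finite (fst ` ?F)" using finite_branch_fms by blast
  have e: "faithful_fm ?F f (\<sigma>, ENeg A)" using faithful_mem[OF F mem] .
  show ?thesis
  proof (cases A)
    case (EVar p)
    then show ?thesis using rule extends_faithfully_Chain[OF F] by simp
  next
    case (ENeg B)
    then have "Pt = Chain [(\<sigma>, B)]" using rule open_branch by simp
    then show ?thesis using extends_faithfully_Chain[OF F] e ENeg unfolding faithful_fm_def by auto
  next
    case (EImp B D)
    then have "Pt = Chain [(\<sigma>, B), (\<sigma>, ENeg D)]" using rule open_branch by simp
    then show ?thesis using extends_faithfully_Chain[OF F] e EImp unfolding faithful_fm_def by auto
  next
    case (EBox B)
    then show ?thesis using rule open_branch rule_neg_box_sound[OF F] mem fresh_LR[OF fin]
      by (simp add: Let_def lab)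
  next
    case (EBoxL \<rho> B)
    then show ?thesis using rule open_branch rule_neg_boxL_sound[OF F] mem fresh_LS[OF fin]
      by (simp add: Let_def lab)
  next
    case (ERhd B D)
    then show ?thesis using rule open_branch rule_neg_rhd_sound[OF F] mem fresh_LR[OF fin]
      by (simp add: Let_def lab)
  qed
qed

lemma rule_pat_sound:
  assumes F: "faithful (branch_fms T q) f" and mem: "(\<sigma>, A) \<in> branch_fms T q"
    and rule: "rule_pat C T q \<sigma> A Pt"
  shows "extends_faithfully (branch_fms T q) Pt"
proof -
  let ?F = "branch_fms T q"
  have open_branch: "\<not> closed_set ?F" using faithful_not_closed[OF F] .
  have lab: "lab T q = fst ` ?F" by (simp add: lab_def)
  show ?thesis
  proof (cases A)
    case (EVar p)
    then show ?thesis using rule extends_faithfully_Chain[OF F] by simp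
  next
    case (ENeg A')
    then show ?thesis using rule_pat_neg_sound[OF F] mem rule by blast
  next
    case (EImp B D)
    then have "Pt = Splits [((\<sigma>, ENeg B), (\<sigma>, D))]" using rule open_branch by simp
    then show ?thesis
      using extends_faithfully_Splits[OF F] faithful_mem[OF F mem] EImp
      unfolding faithful_fm_def by auto
  next
    case (EBox B)
    then obtain ts where "set ts = {\<tau> \<in> fst ` ?F. lrel (fst ` ?F) C (RA \<sigma> \<tau>)}"
        "Pt = Chain (map (\<lambda>\<tau>. (\<tau>, B)) ts)"
      using rule open_branch by (auto simp: enum_of_def lab)
    then show ?thesis using rule_box_sound[OF F] mem EBox by blast
  next
    case (ERhd B D)
    then obtain ts where "set ts = {\<tau> \<in> fst ` ?F. lrel (fst ` ?F) C (RA \<sigma> \<tau>)}"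
        "Pt = Splits (map (\<lambda>\<tau>. ((\<tau>, ENeg B), (\<tau>, ENeg (EBoxL \<sigma> (ENeg D))))) ts)"
      using rule open_branch by (auto simp: enum_of_def lab)
    then show ?thesis using rule_rhd_sound[OF F] mem ERhd by blast
  next
    case (EBoxL \<rho> B)
    then obtain ts where "set ts = {\<tau> \<in> fst ` ?F. lrel (fst ` ?F) C (SA \<rho> \<sigma> \<tau>)}"
        "Pt = Chain (map (\<lambda>\<tau>. (\<tau>, B)) ts)"
      using rule by (auto simp: enum_of_def lab)
    then show ?thesis using rule_boxL_sound[OF F] mem EBoxL by blast
  qed
qed

lemma sys_step_faithful_leaf:
  assumes wf: "wf_tableau T" and leaf: "is_leaf T q" and F: "faithful (branch_fms T q) f"
    and step: "sys_step C T T'"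
  shows "\<exists>q'. prefix q q' \<and> is_leaf T' q' \<and> (\<exists>f'. faithful (branch_fms T' q') f')"
  using sys_step_cases[OF step]
proof
  assume "T' = T"
  then show ?thesis using leaf F by blast
next
  assume "\<exists>p \<sigma> A P. T p = Some (\<sigma>, A, Awake) \<and>
    (\<forall>q. is_leaf T q \<and> prefix p q \<longrightarrow> rule_pat C T q \<sigma> A (P q)) \<and> T' = extend_tab C T p \<sigma> A P"
  then obtain p \<sigma> A P where p: "T p = Some (\<sigma>, A, Awake)"
      "\<And>q. is_leaf T q \<Longrightarrow> prefix p q \<Longrightarrow> rule_pat C T q \<sigma> A (P q)"
      "T' = extend_tab C T p \<sigma> A P"
    by blast
  show ?thesis
  proof (cases "prefix p q")
    case True
    have "(\<sigma>, A) \<in> branch_fms T q" using p(1) True unfolding branch_fms_def by blast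
    from rule_pat_sound[OF F this p(2)[OF leaf True]] obtain d f'
      where "pat_path (P q) d" "faithful (branch_fms T q \<union> pat_fms (P q) d) f'"
      unfolding extends_faithfully_def by blast
    then show ?thesis
      using is_leaf_extend_tab_new[OF wf leaf True] branch_fms_extend_tab_new[OF wf leaf True] p(3)
      by (metis prefixI)
  next
    case False
    then show ?thesis
      using is_leaf_extend_tab_other[OF wf leaf False] branch_fms_extend_tab_old[OF wf] leaf F p(3)
      by (metis is_leaf_def prefix_order.refl)
  qed
qed

lemma faithful_leaf_chain:
  assumes sys: "systematic_tableau C A Ts" and "x \<in> W" and "\<not> forces R S V x A"
  shows "\<exists>qq. \<forall>i. (is_leaf (Ts i) (qq i) \<and> (\<exists>f. faithful (branch_fms (Ts i) (qq i)) f)) \<and>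
    prefix (qq i) (qq (Suc i))"
proof (rule dependent_nat_choice)
  have "interprets W R S {Root} (\<lambda>_. x)" using \<open>x \<in> W\<close> unfolding interprets_def by simp
  then have "faithful {(Root, ENeg (emb A))} (\<lambda>_. x)"
    using assms(3) unfolding faithful_def faithful_fm_def by (simp add: eforces_emb elabels_emb)
  moreover have "is_leaf (init_tab A) []" "branch_fms (init_tab A) [] = {(Root, ENeg (emb A))}"
    unfolding is_leaf_def branch_fms_def init_tab_def by auto
  ultimately have "is_leaf (Ts 0) [] \<and> (\<exists>f. faithful (branch_fms (Ts 0) []) f)"
    using sys unfolding systematic_tableau_def by auto
  then show "\<exists>q. is_leaf (Ts 0) q \<and> (\<exists>f. faithful (branch_fms (Ts 0) q) f)" by blast
next
  fix q i
  assume "is_leaf (Ts i) q \<and> (\<exists>f. faithful (branch_fms (Ts i) q) f)"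
  then show "\<exists>q'. (is_leaf (Ts (Suc i)) q' \<and> (\<exists>f. faithful (branch_fms (Ts (Suc i)) q') f)) \<and>
      prefix q q'"
    using sys_step_faithful_leaf[OF systematic_wf[OF sys]] sys unfolding systematic_tableau_def
    by blast
qed

end

section \<open>The limit branch\<close>

lemma lim_content_in_branch_fms:
  assumes sys: "systematic_tableau C A Ts" and "Ts k r \<noteq> None" and "prefix r q"
  shows "lim_content Ts r \<in> branch_fms (Ts k) q"
proof -
  define i where "i = (LEAST i. Ts i r \<noteq> None)"
  have "Ts i r \<noteq> None" unfolding i_def by (rule LeastI[of "\<lambda>i. Ts i r \<noteq> None", OF assms(2)])
  moreover have "i \<le> k" unfolding i_def by (rule Least_le[of "\<lambda>i. Ts i r \<noteq> None", OF assms(2)])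
  ultimately obtain \<tau> B m where i: "Ts i r = Some (\<tau>, B, m)" by auto
  then have "lim_content Ts r = (\<tau>, B)" unfolding lim_content_def i_def[symmetric] by simp
  moreover obtain m' where "Ts k r = Some (\<tau>, B, m')"
    using systematic_keeps_node[OF sys i \<open>i \<le> k\<close>] by blast
  ultimately show ?thesis using assms(3) unfolding branch_fms_def by auto
qed

lemma prefix_chain_mono:
  assumes "\<And>i. prefix (qq i) (qq (Suc i))" and "prefix r (qq i)" and "i \<le> j"
  shows "prefix r (qq j)"
  using \<open>i \<le> j\<close>
proof (induction j rule: dec_induct)
  case base
  then show ?case using assms(2) .
next
  case (step j)
  show ?case using step.IH assms(1)[of j] by (rule prefix_order.trans)
qed

lemma is_chain_prefixes_of_chain:
  assumes "\<And>i. prefix (qq i) (qq (Suc i))"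
  shows "is_chain {r. \<exists>i. prefix r (qq i)}"
  unfolding is_chain_def
proof (intro ballI)
  fix a b assume "a \<in> {r. \<exists>i. prefix r (qq i)}" "b \<in> {r. \<exists>i. prefix r (qq i)}"
  then obtain i j where "prefix a (qq i)" "prefix b (qq j)" by blast
  then have "prefix a (qq (max i j))" "prefix b (qq (max i j))"
    using prefix_chain_mono[of qq, OF assms] by simp_all
  then show "prefix a b \<or> prefix b a" by (rule prefix_same_cases)
qed

(* Maximality: a node comparable with every qq i, but strictly below one of them, would lie
   below a leaf. *)
lemma lim_branch_of_leaf_chain:
  assumes sys: "systematic_tableau C A Ts" and leaf: "\<And>i. is_leaf (Ts i) (qq i)"
    and chain: "\<And>i. prefix (qq i) (qq (Suc i))"
  shows "lim_branch Ts {r. \<exists>i. prefix r (qq i)}" (is "lim_branch Ts ?P")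
  unfolding lim_branch_def
proof (intro conjI allI impI)
  show "?P \<subseteq> lim_dom Ts"
    using prefix_of_leaf_defined[OF systematic_wf[OF sys] leaf] unfolding lim_dom_def by blast
  show "is_chain ?P" using is_chain_prefixes_of_chain[of qq, OF chain] .
  fix Q assume Q: "Q \<subseteq> lim_dom Ts \<and> is_chain Q \<and> ?P \<subseteq> Q"
  have "r \<in> ?P" if r: "r \<in> Q" for r
  proof -
    obtain j where j: "Ts j r \<noteq> None" using Q r unfolding lim_dom_def by blast
    have "qq j \<in> Q" using Q by blast
    then have "prefix r (qq j) \<or> prefix (qq j) r" using Q r unfolding is_chain_def by blast
    then show ?thesis
      using no_node_below_leaf[OF systematic_wf[OF sys] j leaf] by (auto simp: strict_prefix_def)
  qed
  then show "Q = ?P" using Q by blast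
qed

lemma closed_lim_branch_stage:
  assumes sys: "systematic_tableau C A Ts" and leaf: "\<And>i. is_leaf (Ts i) (qq i)"
    and chain: "\<And>i. prefix (qq i) (qq (Suc i))"
    and closed: "closed_set (lim_content Ts ` {r. \<exists>i. prefix r (qq i)})"
  shows "\<exists>k. closed_set (branch_fms (Ts k) (qq k))"
proof -
  obtain \<sigma> B where "(\<sigma>, B) \<in> lim_content Ts ` {r. \<exists>i. prefix r (qq i)}"
      "(\<sigma>, ENeg B) \<in> lim_content Ts ` {r. \<exists>i. prefix r (qq i)}"
    using closed unfolding closed_set_def by blast
  then obtain r1 r2 i j where r: "prefix r1 (qq i)" "lim_content Ts r1 = (\<sigma>, B)"
      "prefix r2 (qq j)" "lim_content Ts r2 = (\<sigma>, ENeg B)"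
    by (auto elim!: imageE)
  let ?k = "max i j"
  have in_stage: "lim_content Ts r \<in> branch_fms (Ts ?k) (qq ?k)" if "prefix r (qq ?k)" for r
    using lim_content_in_branch_fms[OF sys prefix_of_leaf_defined[OF systematic_wf[OF sys] leaf that]
        that] .
  have "prefix r1 (qq ?k)" "prefix r2 (qq ?k)"
    using prefix_chain_mono[of qq, OF chain] r(1,3) by simp_all
  then have "(\<sigma>, B) \<in> branch_fms (Ts ?k) (qq ?k)" "(\<sigma>, ENeg B) \<in> branch_fms (Ts ?k) (qq ?k)"
    using in_stage r(2,4) by metis+
  then show ?thesis unfolding closed_set_def by blast
qed

theorem mainTheorem4:
  fixes X :: "fm set" and C :: "horn set" and A :: fm and Ts :: "nat \<Rightarrow> tableau"
  assumes horn: "\<forall>(W' :: 'w set) R' S'. IL_frame W' R' S' \<longrightarrow>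
                    (frame_validates_ILX X W' R' S' \<longleftrightarrow> horn_sat C W' R' S')"
    and sys: "systematic_tableau C A Ts"
    and closes: "tab_closes Ts"
  shows "\<forall>(W :: 'w set) R S V. ILX_model C W R S V \<longrightarrow> (\<forall>x\<in>W. forces R S V x A)"
proof (intro allI impI ballI)
  fix W :: "'w set" and R S V x
  assume "ILX_model C W R S V" and x: "x \<in> W"
  then interpret horn_model C W R S V by unfold_locales
  show "forces R S V x A"
  proof (rule ccontr)
    assume "\<not> forces R S V x A"
    then obtain qq where leaf: "\<And>i. is_leaf (Ts i) (qq i)"
        and faithful: "\<And>i. \<exists>f. faithful (branch_fms (Ts i) (qq i)) f"
        and chain: "\<And>i. prefix (qq i) (qq (Suc i))"
      using faithful_leaf_chain[OF sys x] by blast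
    have "lim_branch Ts {r. \<exists>i. prefix r (qq i)}" by (rule lim_branch_of_leaf_chain[OF sys leaf chain])
    then have "closed_set (lim_content Ts ` {r. \<exists>i. prefix r (qq i)})"
      using closes unfolding tab_closes_def by blast
    then obtain k where "closed_set (branch_fms (Ts k) (qq k))"
      using closed_lim_branch_stage[OF sys leaf chain] by blast
    then show False using faithful[of k] faithful_not_closed by blast
  qed
qed

end
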